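(* Let $d\ge2$, $n\ge1$, let $H$ be a Hermitian operator on $(\mathbb{C}^d)^{\otimes n}$ and let $O$ be a linear operator with $\|O\|_2=1$. Then $|R_I(H,O)|\le4n\|H\|_\infty$.
   Context: Let $V=\mathbb{Z}_d\times\mathbb{Z}_d$; for $a=(s,t)\in V$, $P_a=X^sZ^t$ with $X|j\rangle=|j+1\bmod d\rangle$, $Z|j\rangle=e^{2\pi ij/d}|j\rangle$; $P_{\vec a}=\bigotimes_iP_{a_i}$, $|\vec a|=\#\{i:a_i\ne(0,0)\}$. $\|A\|_2=(d^{-n}\mathrm{Tr}(A^\dagger A))^{1/2}$. For $\|O\|_2=1$, $P_O[\vec a]=d^{-2n}|\mathrm{Tr}(OP_{\vec a})|^2$ and $I[O]=\sum_{\vec a}|\vec a|P_O[\vec a]$. The influence rate is $R_I(H,O)=\frac{d}{dt}I[U_tOU_t^\dagger]\big|_{t=0}$ with $U_t=e^{-itH}$; $\|\cdot\|_\infty$ is the operator norm. *)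

theory Defs
  imports "HOL-Analysis.Analysis"
begin

text \<open>Operators on (C^d)^{tensor n} are represented as matrices indexed by
configurations x :: nat \<Rightarrow> nat with x i < d for i < n (restricted
functions, PiE). Only entries on cfg d n matter.\<close>

type_synonym qop = "(nat \<Rightarrow> nat) \<Rightarrow> (nat \<Rightarrow> nat) \<Rightarrow> complex"

definition cfg :: "nat \<Rightarrow> nat \<Rightarrow> (nat \<Rightarrow> nat) set" where
  "cfg d n = PiE {..<n} (\<lambda>_. {..<d})"

definition mmul :: "nat \<Rightarrow> nat \<Rightarrow> qop \<Rightarrow> qop \<Rightarrow> qop" where
  "mmul d n A B = (\<lambda>x y. \<Sum>z\<in>cfg d n. A x z * B z y)"

definition madj :: "qop \<Rightarrow> qop" where
  "madj A = (\<lambda>x y. cnj (A y x))"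

definition mtrace :: "nat \<Rightarrow> nat \<Rightarrow> qop \<Rightarrow> complex" where
  "mtrace d n A = (\<Sum>x\<in>cfg d n. A x x)"

definition mid :: qop where
  "mid = (\<lambda>x y. if x = y then 1 else 0)"

fun mpow :: "nat \<Rightarrow> nat \<Rightarrow> qop \<Rightarrow> nat \<Rightarrow> qop" where
  "mpow d n A 0 = mid"
| "mpow d n A (Suc k) = mmul d n A (mpow d n A k)"

definition mexp :: "nat \<Rightarrow> nat \<Rightarrow> qop \<Rightarrow> qop" where
  "mexp d n A = (\<lambda>x y. \<Sum>k. mpow d n A k x y / of_nat (fact k))"

definition evol :: "nat \<Rightarrow> nat \<Rightarrow> qop \<Rightarrow> real \<Rightarrow> qop" where
  "evol d n H t = mexp d n (\<lambda>x y. - (\<i> * of_real t) * H x y)"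

definition hermitian :: "nat \<Rightarrow> nat \<Rightarrow> qop \<Rightarrow> bool" where
  "hermitian d n H \<longleftrightarrow> (\<forall>x\<in>cfg d n. \<forall>y\<in>cfg d n. H x y = cnj (H y x))"

definition omega :: "nat \<Rightarrow> complex" where
  "omega d = exp (2 * of_real pi * \<i> / of_nat d)"

text \<open>Single-site X^s Z^t: (X^s Z^t)|k> = omega^(t k) |k+s mod d>.\<close>
definition pauli1 :: "nat \<Rightarrow> nat \<times> nat \<Rightarrow> nat \<Rightarrow> nat \<Rightarrow> complex" where
  "pauli1 d a j k = (if j = (k + fst a) mod d then omega d ^ (snd a * k) else 0)"

definition pauli :: "nat \<Rightarrow> nat \<Rightarrow> (nat \<Rightarrow> nat \<times> nat) \<Rightarrow> qop" where
  "pauli d n a = (\<lambda>x y. \<Prod>i<n. pauli1 d (a i) (x i) (y i))"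

definition labels :: "nat \<Rightarrow> nat \<Rightarrow> (nat \<Rightarrow> nat \<times> nat) set" where
  "labels d n = PiE {..<n} (\<lambda>_. {..<d} \<times> {..<d})"

definition weight :: "nat \<Rightarrow> (nat \<Rightarrow> nat \<times> nat) \<Rightarrow> nat" where
  "weight n a = card {i\<in>{..<n}. a i \<noteq> (0, 0)}"

definition hs_norm :: "nat \<Rightarrow> nat \<Rightarrow> qop \<Rightarrow> real" where
  "hs_norm d n A = sqrt (Re (mtrace d n (mmul d n (madj A) A)) / real d ^ n)"

definition pauli_weight :: "nat \<Rightarrow> nat \<Rightarrow> qop \<Rightarrow> (nat \<Rightarrow> nat \<times> nat) \<Rightarrow> real" where
  "pauli_weight d n Op a = (cmod (mtrace d n (mmul d n Op (pauli d n a))))\<^sup>2 / real d ^ (2 * n)"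

definition influence :: "nat \<Rightarrow> nat \<Rightarrow> qop \<Rightarrow> real" where
  "influence d n Op = (\<Sum>a\<in>labels d n. real (weight n a) * pauli_weight d n Op a)"

definition vnorm :: "nat \<Rightarrow> nat \<Rightarrow> ((nat \<Rightarrow> nat) \<Rightarrow> complex) \<Rightarrow> real" where
  "vnorm d n v = sqrt (\<Sum>x\<in>cfg d n. (cmod (v x))\<^sup>2)"

definition mvmul :: "nat \<Rightarrow> nat \<Rightarrow> qop \<Rightarrow> ((nat \<Rightarrow> nat) \<Rightarrow> complex) \<Rightarrow> ((nat \<Rightarrow> nat) \<Rightarrow> complex)" where
  "mvmul d n A v = (\<lambda>x. \<Sum>y\<in>cfg d n. A x y * v y)"

definition op_norm :: "nat \<Rightarrow> nat \<Rightarrow> qop \<Rightarrow> real" where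
  "op_norm d n A = Sup {vnorm d n (mvmul d n A v) | v. vnorm d n v = 1}"

text \<open>t \<mapsto> I[U_t O U_t^dagger]; the influence rate is its derivative at 0.\<close>
definition influence_traj :: "nat \<Rightarrow> nat \<Rightarrow> qop \<Rightarrow> qop \<Rightarrow> real \<Rightarrow> real" where
  "influence_traj d n H Op t =
     influence d n (mmul d n (mmul d n (evol d n H t) Op) (madj (evol d n H t)))"

end

(*
  Let W t = U_t O U_t^* and K = -iH.  Expanding the exponential series shows that W is
  entrywise differentiable at 0 with W'(0) = K O + O K^*.  The influence is the weighted sum
  of the squared Pauli coefficients |c_a(W)|^2 / d^(2n) with weights |a| <= n, so its
  derivative is the sum of |a| 2 Re(conj c_a(O) c_a(W'(0))) / d^(2n).  By Cauchy-Schwarz and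
  Parseval's identity for the Pauli basis, sum_a |c_a(X)|^2 = d^(2n) ||X||_2^2, this is at
  most 2n ||O||_2 ||W'(0)||_2, and ||K O||_2, ||O K^*||_2 <= ||H||_oo ||O||_2.
*)
theory Submission
  imports Defs
begin

lemma finite_cfg [simp]: "finite (cfg d n)"
  by (simp add: cfg_def finite_PiE)

lemma finite_labels [simp]: "finite (labels d n)"
  by (simp add: labels_def finite_PiE)

lemma cfg_nonempty: "0 < d \<Longrightarrow> cfg d n \<noteq> {}"
  by (auto simp: cfg_def PiE_eq_empty_iff)

lemma cfg_lt: "x \<in> cfg d n \<Longrightarrow> i < n \<Longrightarrow> x i < d"
  by (auto simp: cfg_def PiE_def Pi_def)

lemma cfg_eq_iff: "x \<in> cfg d n \<Longrightarrow> x' \<in> cfg d n \<Longrightarrow> (\<forall>i<n. x i = x' i) \<longleftrightarrow> x = x'"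
  by (auto simp: cfg_def PiE_def extensional_def fun_eq_iff) (metis lessThan_iff)

lemma mmul_mid_left: "x \<in> cfg d n \<Longrightarrow> mmul d n mid A x y = A x y"
  by (simp add: mmul_def mid_def if_distrib[of "\<lambda>c. c * _"] cong: if_cong)

lemma mmul_mid_right: "y \<in> cfg d n \<Longrightarrow> mmul d n A mid x y = A x y"
  by (simp add: mmul_def mid_def if_distrib[of "\<lambda>c. _ * c"] cong: if_cong)

lemma madj_mid [simp]: "madj mid = mid"
  by (simp add: madj_def mid_def fun_eq_iff)

lemma madj_madj [simp]: "madj (madj A) = A"
  by (simp add: madj_def)

lemma madj_mmul: "madj (mmul d n A B) = mmul d n (madj B) (madj A)"
  by (simp add: madj_def mmul_def fun_eq_iff mult.commute)

section \<open>The matrix exponential near zero\<close>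

lemma mpow_scale: "mpow d n (\<lambda>x y. c * A x y) k = (\<lambda>x y. c ^ k * mpow d n A k x y)"
  by (induction k) (auto simp: mmul_def mid_def sum_distrib_left mult_ac)

lemma norm_mpow_le:
  assumes "x \<in> cfg d n"
  shows "cmod (mpow d n A k x z) \<le> (\<Sum>x\<in>cfg d n. \<Sum>y\<in>cfg d n. cmod (A x y)) ^ k"
  using assms
proof (induction k arbitrary: x)
  case 0
  then show ?case by (simp add: mid_def)
next
  case (Suc k)
  define M where "M = (\<Sum>x\<in>cfg d n. \<Sum>y\<in>cfg d n. cmod (A x y))"
  have nonneg: "0 \<le> M ^ k"
    by (simp add: M_def sum_nonneg)
  have row: "(\<Sum>w\<in>cfg d n. cmod (A x w)) \<le> M"
    unfolding M_def using Suc.prems by (intro member_le_sum) (auto intro: sum_nonneg)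
  have "cmod (mpow d n A (Suc k) x z) \<le> (\<Sum>w\<in>cfg d n. cmod (A x w) * cmod (mpow d n A k w z))"
    unfolding mpow.simps mmul_def by (rule order_trans[OF norm_sum]) (simp add: norm_mult)
  also have "\<dots> \<le> (\<Sum>w\<in>cfg d n. cmod (A x w) * M ^ k)"
    by (intro sum_mono mult_left_mono) (auto simp: Suc.IH M_def)
  also have "\<dots> \<le> M * M ^ k"
    using row nonneg by (simp add: mult_right_mono flip: sum_distrib_right)
  finally show ?case by (simp add: M_def)
qed

lemma mexp_scale_eq_powser:
  "mexp d n (\<lambda>x y. c * A x y) x z = (\<Sum>k. mpow d n A k x z / fact k * c ^ k)"
  by (simp add: mexp_def mpow_scale mult_ac)

lemma summable_mexp_powser:
  assumes "x \<in> cfg d n"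
  shows "summable (\<lambda>k. mpow d n A k x z / fact k * c ^ k)"
proof (rule summable_comparison_test')
  define M where "M = (\<Sum>x\<in>cfg d n. \<Sum>y\<in>cfg d n. cmod (A x y))"
  show "summable (\<lambda>k. (M * cmod c) ^ k / fact k)"
    using summable_exp[of "M * cmod c"] by (simp add: divide_inverse mult.commute)
  fix k
  have "norm (mpow d n A k x z / fact k * c ^ k) = cmod (mpow d n A k x z) * cmod c ^ k / fact k"
    by (simp add: norm_mult norm_divide norm_power)
  also have "\<dots> \<le> M ^ k * cmod c ^ k / fact k"
    using norm_mpow_le[OF assms] unfolding M_def by (intro divide_right_mono mult_right_mono) auto
  finally show "norm (mpow d n A k x z / fact k * c ^ k) \<le> (M * cmod c) ^ k / fact k"
    by (simp add: power_mult_distrib)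
qed

lemma mexp_scale_has_field_derivative:
  assumes "x \<in> cfg d n" "z \<in> cfg d n"
  shows "((\<lambda>c. mexp d n (\<lambda>x y. c * A x y) x z) has_field_derivative A x z) (at 0)"
proof -
  let ?a = "\<lambda>k. mpow d n A k x z / fact k"
  have "((\<lambda>c. \<Sum>k. ?a k * c ^ k) has_field_derivative (\<Sum>k. diffs ?a k * 0 ^ k)) (at 0)"
    by (rule termdiffs_strong_converges_everywhere) (rule summable_mexp_powser[OF assms(1)])
  moreover have "(\<Sum>k. diffs ?a k * 0 ^ k) = A x z"
    using powser_zero[of "diffs ?a"] by (simp add: diffs_def mmul_mid_right[OF assms(2)])
  ultimately show ?thesis
    by (simp only: mexp_scale_eq_powser)
qed

lemma mexp_zero: "mexp d n (\<lambda>_ _. 0) x z = mid x z"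
  using mexp_scale_eq_powser[of d n 0 "\<lambda>_ _. 0" x z]
    powser_zero[of "\<lambda>k. mpow d n (\<lambda>_ _. 0) k x z / fact k"]
  by simp

lemma evol_eq_mexp_scale: "evol d n H t = mexp d n (\<lambda>x y. of_real t * (- \<i> * H x y))"
  by (simp add: evol_def mult_ac)

lemma evol_0: "evol d n H 0 x z = mid x z"
  by (simp add: evol_def mexp_zero)

lemma evol_has_vector_derivative:
  assumes "x \<in> cfg d n" "z \<in> cfg d n"
  shows "((\<lambda>t. evol d n H t x z) has_vector_derivative - \<i> * H x z) (at 0)"
proof -
  have "((\<lambda>c. mexp d n (\<lambda>x y. c * (- \<i> * H x y)) x z) has_field_derivative - \<i> * H x z)
          (at (of_real 0))"
    using mexp_scale_has_field_derivative[OF assms, of "\<lambda>x y. - \<i> * H x y"] by simp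
  from has_vector_derivative_real_field[OF this] show ?thesis
    unfolding evol_eq_mexp_scale .
qed

section \<open>Derivative of the influence\<close>

lemma conjugation_at_0:
  assumes U0: "\<And>x z. x \<in> cfg d n \<Longrightarrow> z \<in> cfg d n \<Longrightarrow> U 0 x z = mid x z"
    and x: "x \<in> cfg d n" and y: "y \<in> cfg d n"
  shows "mmul d n (mmul d n (U 0) A) (madj (U 0)) x y = A x y"
proof -
  have "mmul d n (mmul d n (U 0) A) (madj (U 0)) x y = mmul d n (mmul d n mid A) (madj mid) x y"
    using x y by (auto simp: mmul_def madj_def U0 intro!: sum.cong)
  also have "\<dots> = A x y"
    using x y by (simp add: mmul_mid_left mmul_mid_right)
  finally show ?thesis .
qed

lemma conjugation_has_vector_derivative:
  assumes U0: "\<And>x z. x \<in> cfg d n \<Longrightarrow> z \<in> cfg d n \<Longrightarrow> U 0 x z = mid x z"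
    and dU: "\<And>x z. x \<in> cfg d n \<Longrightarrow> z \<in> cfg d n \<Longrightarrow>
               ((\<lambda>t. U t x z) has_vector_derivative K x z) (at 0)"
    and x: "x \<in> cfg d n" and y: "y \<in> cfg d n"
  shows "((\<lambda>t. mmul d n (mmul d n (U t) A) (madj (U t)) x y) has_vector_derivative
           mmul d n K A x y + mmul d n A (madj K) x y) (at 0)"
proof -
  have "((\<lambda>t. \<Sum>w\<in>cfg d n. (\<Sum>z\<in>cfg d n. U t x z * A z w) * cnj (U t y w)) has_vector_derivative
          (\<Sum>w\<in>cfg d n. (\<Sum>z\<in>cfg d n. U 0 x z * A z w) * cnj (K y w)
                        + (\<Sum>z\<in>cfg d n. K x z * A z w) * cnj (U 0 y w))) (at 0)"
    using x y
    by (intro has_vector_derivative_mult has_vector_derivative_sum has_vector_derivative_mult_left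
        has_vector_derivative_cnj dU) auto
  also have "(\<Sum>w\<in>cfg d n. (\<Sum>z\<in>cfg d n. U 0 x z * A z w) * cnj (K y w)
                        + (\<Sum>z\<in>cfg d n. K x z * A z w) * cnj (U 0 y w))
           = mmul d n (mmul d n mid A) (madj K) x y + mmul d n (mmul d n K A) (madj mid) x y"
    using x y by (auto simp: mmul_def madj_def sum.distrib U0 intro!: sum.cong)
  also have "\<dots> = mmul d n A (madj K) x y + mmul d n K A x y"
    using x y by (simp add: mmul_def[of d n "mmul d n mid A"] mmul_def[of d n A] mmul_mid_left mmul_mid_right)
  finally show ?thesis
    by (simp add: mmul_def madj_def add.commute)
qed

lemma norm_power2_has_real_derivative:
  fixes g :: "real \<Rightarrow> complex"
  assumes "(g has_vector_derivative g') (at t)"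
  shows "((\<lambda>t. (cmod (g t))\<^sup>2) has_real_derivative 2 * Re (cnj (g t) * g')) (at t)"
proof -
  have norm_sq: "(cmod z)\<^sup>2 = Re (z * cnj z)" for z
    by (simp add: complex_mult_cnj cmod_def)
  have "((\<lambda>t. g t * cnj (g t)) has_vector_derivative g t * cnj g' + g' * cnj (g t)) (at t)"
    by (intro has_vector_derivative_mult has_vector_derivative_cnj assms)
  from bounded_linear.has_vector_derivative[OF bounded_linear_Re this]
  have "((\<lambda>t. Re (g t * cnj (g t))) has_vector_derivative Re (g t * cnj g' + g' * cnj (g t))) (at t)" .
  moreover have "Re (g t * cnj g' + g' * cnj (g t)) = 2 * Re (cnj (g t) * g')"
    by (simp add: algebra_simps)
  ultimately show ?thesis
    unfolding norm_sq has_real_derivative_iff_has_vector_derivative by (simp only:)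
qed

definition pauli_coeff :: "nat \<Rightarrow> nat \<Rightarrow> qop \<Rightarrow> (nat \<Rightarrow> nat \<times> nat) \<Rightarrow> complex" where
  "pauli_coeff d n A a = mtrace d n (mmul d n A (pauli d n a))"

lemma pauli_coeff_eq_sum: "pauli_coeff d n A a = (\<Sum>x\<in>cfg d n. \<Sum>z\<in>cfg d n. A x z * pauli d n a z x)"
  by (simp add: pauli_coeff_def mtrace_def mmul_def)

lemma pauli_coeff_has_vector_derivative:
  assumes "\<And>x y. x \<in> cfg d n \<Longrightarrow> y \<in> cfg d n \<Longrightarrow>
             ((\<lambda>t. W t x y) has_vector_derivative B x y) (at 0)"
  shows "((\<lambda>t. pauli_coeff d n (W t) a) has_vector_derivative pauli_coeff d n B a) (at 0)"
  unfolding pauli_coeff_eq_sum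
  by (intro has_vector_derivative_sum has_vector_derivative_mult_left assms)

lemma influence_eq_sum_pauli_coeff:
  "influence d n A =
     (\<Sum>a\<in>labels d n. real (weight n a) * ((cmod (pauli_coeff d n A a))\<^sup>2 / real d ^ (2 * n)))"
  by (simp add: influence_def pauli_weight_def pauli_coeff_def)

definition influence_dir_deriv :: "nat \<Rightarrow> nat \<Rightarrow> qop \<Rightarrow> qop \<Rightarrow> real" where
  "influence_dir_deriv d n A B =
     (\<Sum>a\<in>labels d n. real (weight n a) *
        (2 * Re (cnj (pauli_coeff d n A a) * pauli_coeff d n B a) / real d ^ (2 * n)))"

lemma influence_has_real_derivative:
  assumes W0: "\<And>x y. x \<in> cfg d n \<Longrightarrow> y \<in> cfg d n \<Longrightarrow> W 0 x y = A x y"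
    and dW: "\<And>x y. x \<in> cfg d n \<Longrightarrow> y \<in> cfg d n \<Longrightarrow>
               ((\<lambda>t. W t x y) has_vector_derivative B x y) (at 0)"
  shows "((\<lambda>t. influence d n (W t)) has_real_derivative influence_dir_deriv d n A B) (at 0)"
proof -
  have coeff_0: "pauli_coeff d n (W 0) a = pauli_coeff d n A a" for a
    unfolding pauli_coeff_eq_sum by (auto intro!: sum.cong simp: W0)
  have "((\<lambda>t. pauli_coeff d n (W t) a) has_vector_derivative pauli_coeff d n B a) (at 0)" for a
    using dW by (rule pauli_coeff_has_vector_derivative)
  then have "((\<lambda>t. (cmod (pauli_coeff d n (W t) a))\<^sup>2) has_real_derivative
               2 * Re (cnj (pauli_coeff d n (W 0) a) * pauli_coeff d n B a)) (at 0)" for a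
    by (rule norm_power2_has_real_derivative)
  then show ?thesis
    unfolding influence_eq_sum_pauli_coeff influence_dir_deriv_def coeff_0
    by (intro DERIV_sum DERIV_cmult DERIV_cdivide)
qed

section \<open>Parseval's identity for the Pauli basis\<close>

lemma omega_pow: "omega d ^ m = exp (of_real (2 * pi * real m / real d) * \<i>)"
proof -
  have "omega d ^ m = exp (of_nat m * (2 * of_real pi * \<i> / of_nat d))"
    by (simp only: omega_def exp_of_nat_mult)
  then show ?thesis
    by (simp add: mult_ac)
qed

lemma omega_mult_cnj: "omega d * cnj (omega d) = 1"
  by (simp add: omega_def exp_cnj flip: exp_add)

lemma omega_pow_d: "0 < d \<Longrightarrow> omega d ^ d = 1"
  by (simp add: omega_pow exp_eq_1)

lemma omega_pow_neq_1:
  assumes "0 < m" "m < d"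
  shows "omega d ^ m \<noteq> 1"
proof
  assume "omega d ^ m = 1"
  then obtain k :: int where "2 * pi * real m / real d = 2 * pi * of_int k"
    by (auto simp: omega_pow exp_eq_1)
  then have "real m / real d = of_int k"
    using assms by (simp add: field_simps)
  moreover have "0 < real m / real d" "real m / real d < 1"
    using assms by auto
  ultimately show False
    by auto
qed

lemma sum_omega_pow_mult_cnj:
  assumes "0 < d" "k < d" "k' < d"
  shows "(\<Sum>t<d. omega d ^ (t * k) * cnj (omega d ^ (t * k'))) = (if k = k' then of_nat d else 0)"
proof -
  define q where "q = omega d ^ k * cnj (omega d) ^ k'"
  have power_q: "omega d ^ (t * k) * cnj (omega d ^ (t * k')) = q ^ t" for t
    by (simp add: q_def power_mult_distrib mult.commute[of t] flip: power_mult)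
  have unit: "omega d ^ j * cnj (omega d) ^ j = 1" for j
    by (simp add: omega_mult_cnj flip: power_mult_distrib)
  show ?thesis
  proof (cases "k = k'")
    case True
    then show ?thesis
      by (simp add: power_q q_def unit)
  next
    case False
    have "q ^ d = (omega d ^ d) ^ k * cnj (omega d ^ d) ^ k'"
      by (simp add: q_def power_mult_distrib mult.commute flip: power_mult)
    then have "q ^ d = 1"
      using omega_pow_d[OF assms(1)] by simp
    moreover have "q \<noteq> 1"
    proof (cases "k' < k")
      case True
      then have "q = omega d ^ (k - k') * (omega d ^ k' * cnj (omega d) ^ k')"
        by (simp add: q_def mult.assoc flip: power_add)
      then show ?thesis
        using omega_pow_neq_1[of "k - k'" d] True assms(2) by (simp add: unit)
    next
      case False
      with \<open>k \<noteq> k'\<close> have "k < k'"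
        by simp
      then have "q = cnj (omega d ^ (k' - k)) * (omega d ^ k * cnj (omega d) ^ k)"
        by (simp add: q_def mult_ac flip: power_add)
      then have "q = cnj (omega d ^ (k' - k))"
        by (simp only: unit mult_1_right)
      moreover have "omega d ^ (k' - k) \<noteq> 1"
        using omega_pow_neq_1[of "k' - k" d] \<open>k < k'\<close> assms(3) by simp
      ultimately show ?thesis
        by (metis complex_cnj_cnj complex_cnj_one)
    qed
    ultimately have "(\<Sum>t<d. q ^ t) = 0"
      using geometric_sum[of q d] by simp
    with False show ?thesis
      by (simp only: power_q) simp
  qed
qed

lemma mod_add_eq_iff:
  fixes d j k s :: nat
  assumes "s < d" "j < d" "k < d"
  shows "j = (k + s) mod d \<longleftrightarrow> s = (j + d - k) mod d"
  using assms by (cases "k + s < d"; cases "k \<le> j") (auto simp: mod_if le_mod_geq)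

lemma pauli1_orthogonal:
  assumes "0 < d" "j < d" "k < d" "j' < d" "k' < d"
  shows "(\<Sum>c\<in>{..<d} \<times> {..<d}. pauli1 d c j k * cnj (pauli1 d c j' k'))
         = (if j = j' \<and> k = k' then of_nat d else 0)"
proof -
  have "(\<Sum>c\<in>{..<d} \<times> {..<d}. pauli1 d c j k * cnj (pauli1 d c j' k'))
      = (\<Sum>s<d. \<Sum>t<d. pauli1 d (s, t) j k * cnj (pauli1 d (s, t) j' k'))"
    by (simp add: sum.cartesian_product)
  also have "\<dots> = (\<Sum>s<d. if j = (k + s) mod d \<and> j' = (k' + s) mod d
                  then (\<Sum>t<d. omega d ^ (t * k) * cnj (omega d ^ (t * k'))) else 0)"
    by (auto simp: pauli1_def mult.commute intro!: sum.cong)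
  also have "\<dots> = (\<Sum>s<d. if j = (k + s) mod d \<and> j' = (k' + s) mod d
                          then (if k = k' then of_nat d else 0) else 0)"
    unfolding sum_omega_pow_mult_cnj[OF assms(1,3,5)] ..
  also have "\<dots> = (if j = j' \<and> k = k' then of_nat d else 0)"
  proof (cases "j = j' \<and> k = k'")
    case True
    then have "(\<Sum>s<d. if j = (k + s) mod d \<and> j' = (k' + s) mod d
                          then (if k = k' then of_nat d else 0) else 0)
             = (\<Sum>s<d. if s = (j + d - k) mod d then of_nat d else (0::complex))"
      using assms by (intro sum.cong refl) (simp add: mod_add_eq_iff)
    then show ?thesis
      using True assms(1) by simp
  next
    case False
    then show ?thesis
      by (auto intro!: sum.neutral)
  qed
  finally show ?thesis .
qed

lemma pauli_orthogonal:
  assumes "0 < d" and xy: "x \<in> cfg d n" "y \<in> cfg d n" "x' \<in> cfg d n" "y' \<in> cfg d n"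
  shows "(\<Sum>a\<in>labels d n. pauli d n a y x * cnj (pauli d n a y' x'))
         = (if x = x' \<and> y = y' then of_nat d ^ n else 0)"
proof -
  have "(\<Sum>a\<in>labels d n. pauli d n a y x * cnj (pauli d n a y' x'))
      = (\<Sum>a\<in>labels d n. \<Prod>i<n. pauli1 d (a i) (y i) (x i) * cnj (pauli1 d (a i) (y' i) (x' i)))"
    by (simp add: pauli_def prod.distrib)
  also have "\<dots> = (\<Prod>i<n. \<Sum>c\<in>{..<d} \<times> {..<d}. pauli1 d c (y i) (x i) * cnj (pauli1 d c (y' i) (x' i)))"
    unfolding labels_def by (rule prod_sum_PiE[symmetric]) auto
  also have "\<dots> = (\<Prod>i<n. if y i = y' i \<and> x i = x' i then of_nat d else 0)"
    using xy by (intro prod.cong refl pauli1_orthogonal[OF assms(1)]) (auto intro: cfg_lt)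
  also have "\<dots> = (if \<forall>i<n. y i = y' i \<and> x i = x' i then of_nat d ^ n else 0)"
    by (auto intro: prod_zero)
  also have "(\<forall>i<n. y i = y' i \<and> x i = x' i) \<longleftrightarrow> x = x' \<and> y = y'"
    using cfg_eq_iff[OF xy(1) xy(3)] cfg_eq_iff[OF xy(2) xy(4)] by blast
  finally show ?thesis .
qed

lemma hs_norm_eq: "hs_norm d n A = sqrt ((\<Sum>x\<in>cfg d n. \<Sum>y\<in>cfg d n. (cmod (A x y))\<^sup>2) / real d ^ n)"
proof -
  have norm_sq: "Re (cnj z * z) = (cmod z)\<^sup>2" for z
    by (simp add: complex_mult_cnj cmod_def power2_eq_square mult.commute)
  have "Re (mtrace d n (mmul d n (madj A) A)) = (\<Sum>y\<in>cfg d n. \<Sum>x\<in>cfg d n. (cmod (A x y))\<^sup>2)"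
    by (simp only: mtrace_def mmul_def madj_def Re_sum norm_sq)
  also have "\<dots> = (\<Sum>x\<in>cfg d n. \<Sum>y\<in>cfg d n. (cmod (A x y))\<^sup>2)"
    by (rule sum.swap)
  finally show ?thesis
    unfolding hs_norm_def by simp
qed

lemma hs_norm_nonneg [simp]: "0 \<le> hs_norm d n A"
  by (simp add: hs_norm_eq sum_nonneg)

lemma sum_norm_sq_pauli_coeff:
  assumes "0 < d"
  shows "(\<Sum>a\<in>labels d n. (cmod (pauli_coeff d n A a))\<^sup>2)
       = real d ^ n * (\<Sum>x\<in>cfg d n. \<Sum>y\<in>cfg d n. (cmod (A x y))\<^sup>2)"
proof -
  define C where "C = cfg d n \<times> cfg d n"
  define f where "f a p = A (fst p) (snd p) * pauli d n a (snd p) (fst p)" for a p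
  have coeff: "pauli_coeff d n A a = (\<Sum>p\<in>C. f a p)" for a
    by (simp add: pauli_coeff_eq_sum C_def f_def sum.cartesian_product case_prod_beta)
  have orth: "(\<Sum>a\<in>labels d n. f a p * cnj (f a q))
        = (if p = q then of_nat d ^ n * (A (fst p) (snd p) * cnj (A (fst p) (snd p))) else 0)"
    if "p \<in> C" "q \<in> C" for p q
  proof -
    have "(\<Sum>a\<in>labels d n. f a p * cnj (f a q))
        = A (fst p) (snd p) * cnj (A (fst q) (snd q)) *
          (\<Sum>a\<in>labels d n. pauli d n a (snd p) (fst p) * cnj (pauli d n a (snd q) (fst q)))"
      by (simp add: f_def sum_distrib_left mult_ac)
    also have "\<dots> = A (fst p) (snd p) * cnj (A (fst q) (snd q)) *
          (if fst p = fst q \<and> snd p = snd q then of_nat d ^ n else 0)"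
      using that by (subst pauli_orthogonal[OF assms]) (auto simp: C_def)
    finally show ?thesis
      by (auto simp: prod_eq_iff)
  qed
  have "complex_of_real (\<Sum>a\<in>labels d n. (cmod (pauli_coeff d n A a))\<^sup>2)
      = (\<Sum>a\<in>labels d n. pauli_coeff d n A a * cnj (pauli_coeff d n A a))"
    by (simp only: of_real_sum complex_norm_square)
  also have "\<dots> = (\<Sum>a\<in>labels d n. \<Sum>p\<in>C. \<Sum>q\<in>C. f a p * cnj (f a q))"
    by (simp add: coeff sum_product)
  also have "\<dots> = (\<Sum>p\<in>C. \<Sum>q\<in>C. \<Sum>a\<in>labels d n. f a p * cnj (f a q))"
    by (subst sum.swap) (simp add: sum.swap[of _ "labels d n"])
  also have "\<dots> = (\<Sum>p\<in>C. of_nat d ^ n * (A (fst p) (snd p) * cnj (A (fst p) (snd p))))"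
    by (simp add: orth C_def)
  also have "\<dots> = complex_of_real (real d ^ n * (\<Sum>x\<in>cfg d n. \<Sum>y\<in>cfg d n. (cmod (A x y))\<^sup>2))"
    by (simp add: C_def sum_distrib_left sum.cartesian_product case_prod_beta flip: complex_norm_square)
  finally show ?thesis
    by (simp only: of_real_eq_iff)
qed

lemma L2_set_pauli_coeff:
  assumes "0 < d"
  shows "L2_set (\<lambda>a. cmod (pauli_coeff d n A a)) (labels d n) = real d ^ n * hs_norm d n A"
proof -
  have sqrt_mult_eq: "sqrt (N * S) = N * sqrt (S / N)" if "0 < N" for N S :: real
    using that by (simp add: real_sqrt_divide real_sqrt_mult field_simps)
  show ?thesis
    unfolding L2_set_def sum_norm_sq_pauli_coeff[OF assms] hs_norm_eq
    using assms by (intro sqrt_mult_eq) simp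
qed

section \<open>Norm estimates\<close>

lemma hs_norm_eq_L2_set:
  "hs_norm d n A = L2_set (\<lambda>p. cmod (A (fst p) (snd p))) (cfg d n \<times> cfg d n) / sqrt (real d ^ n)"
  by (simp add: hs_norm_eq L2_set_def sum.cartesian_product case_prod_beta real_sqrt_divide)

lemma hs_norm_add_le: "hs_norm d n (\<lambda>x y. A x y + B x y) \<le> hs_norm d n A + hs_norm d n B"
proof -
  let ?C = "cfg d n \<times> cfg d n"
  have "L2_set (\<lambda>p. cmod (A (fst p) (snd p) + B (fst p) (snd p))) ?C
        \<le> L2_set (\<lambda>p. cmod (A (fst p) (snd p)) + cmod (B (fst p) (snd p))) ?C"
    by (intro L2_set_mono norm_triangle_ineq) auto
  also have "\<dots> \<le> L2_set (\<lambda>p. cmod (A (fst p) (snd p))) ?C + L2_set (\<lambda>p. cmod (B (fst p) (snd p))) ?C"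
    by (rule L2_set_triangle_ineq)
  finally show ?thesis
    unfolding hs_norm_eq_L2_set by (simp add: divide_right_mono flip: add_divide_distrib)
qed

lemma hs_norm_madj: "hs_norm d n (madj A) = hs_norm d n A"
  unfolding hs_norm_eq madj_def complex_mod_cnj by (subst sum.swap) (rule refl)

lemma vnorm_eq_L2_set: "vnorm d n v = L2_set (\<lambda>x. cmod (v x)) (cfg d n)"
  by (simp add: vnorm_def L2_set_def)

lemma vnorm_nonneg [simp]: "0 \<le> vnorm d n v"
  by (simp add: vnorm_eq_L2_set)

lemma vnorm_scale: "vnorm d n (\<lambda>x. c * v x) = cmod c * vnorm d n v"
  by (simp add: vnorm_eq_L2_set norm_mult L2_set_right_distrib)

lemma mvmul_scale_right: "mvmul d n A (\<lambda>y. c * v y) = (\<lambda>x. c * mvmul d n A v x)"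
  by (simp add: mvmul_def sum_distrib_left mult_ac)

lemma mvmul_scale_left: "mvmul d n (\<lambda>x y. c * A x y) v = (\<lambda>x. c * mvmul d n A v x)"
  by (simp add: mvmul_def sum_distrib_left mult_ac)

lemma vnorm_mvmul_le_frobenius:
  "vnorm d n (mvmul d n A v) \<le> L2_set (\<lambda>x. L2_set (\<lambda>y. cmod (A x y)) (cfg d n)) (cfg d n) * vnorm d n v"
proof -
  have row: "cmod (mvmul d n A v x) \<le> L2_set (\<lambda>y. cmod (A x y)) (cfg d n) * vnorm d n v" for x
  proof -
    have "cmod (mvmul d n A v x) \<le> (\<Sum>y\<in>cfg d n. \<bar>cmod (A x y)\<bar> * \<bar>cmod (v y)\<bar>)"
      unfolding mvmul_def by (rule order_trans[OF norm_sum]) (simp add: norm_mult)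
    also have "\<dots> \<le> L2_set (\<lambda>y. cmod (A x y)) (cfg d n) * vnorm d n v"
      unfolding vnorm_eq_L2_set by (rule L2_set_mult_ineq)
    finally show ?thesis .
  qed
  have "vnorm d n (mvmul d n A v) \<le> L2_set (\<lambda>x. L2_set (\<lambda>y. cmod (A x y)) (cfg d n) * vnorm d n v) (cfg d n)"
    unfolding vnorm_eq_L2_set[of _ _ "mvmul d n A v"] by (rule L2_set_mono) (auto simp: row)
  then show ?thesis
    by (simp add: L2_set_left_distrib vnorm_eq_L2_set)
qed

lemma bdd_above_op_norm: "bdd_above {vnorm d n (mvmul d n A v) | v. vnorm d n v = 1}"
proof (rule bdd_aboveI)
  fix r
  assume "r \<in> {vnorm d n (mvmul d n A v) | v. vnorm d n v = 1}"
  then obtain v where "r = vnorm d n (mvmul d n A v)" "vnorm d n v = 1"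
    by blast
  then show "r \<le> L2_set (\<lambda>x. L2_set (\<lambda>y. cmod (A x y)) (cfg d n)) (cfg d n)"
    using vnorm_mvmul_le_frobenius[of d n A v] by simp
qed

lemma vnorm_mvmul_le: "vnorm d n (mvmul d n A v) \<le> op_norm d n A * vnorm d n v"
proof (cases "vnorm d n v = 0")
  case True
  then have "\<forall>y\<in>cfg d n. v y = 0"
    by (simp add: vnorm_eq_L2_set L2_set_eq_0_iff)
  then have "mvmul d n A v = (\<lambda>_. 0)"
    by (simp add: mvmul_def fun_eq_iff)
  then show ?thesis
    using True by (simp add: vnorm_def)
next
  case False
  define r where "r = vnorm d n v"
  have "0 < r"
    using False L2_set_nonneg[of "\<lambda>x. cmod (v x)" "cfg d n"]
    unfolding r_def vnorm_eq_L2_set by linarith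
  define u where "u y = v y / of_real r" for y
  have v_eq: "v = (\<lambda>y. of_real r * u y)"
    using \<open>0 < r\<close> by (simp add: u_def fun_eq_iff)
  have "vnorm d n v = r * vnorm d n u"
    by (subst v_eq) (simp add: vnorm_scale \<open>0 < r\<close> less_imp_le)
  then have "vnorm d n u = 1"
    using \<open>0 < r\<close> by (simp add: r_def)
  then have "vnorm d n (mvmul d n A u) \<le> op_norm d n A"
    unfolding op_norm_def by (intro cSup_upper bdd_above_op_norm) auto
  moreover have "vnorm d n (mvmul d n A v) = r * vnorm d n (mvmul d n A u)"
    by (subst v_eq) (simp add: mvmul_scale_right vnorm_scale \<open>0 < r\<close> less_imp_le)
  ultimately show ?thesis
    using \<open>0 < r\<close> by (simp add: r_def[symmetric] mult.commute)
qed

lemma op_norm_nonneg: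
  assumes "0 < d"
  shows "0 \<le> op_norm d n A"
proof -
  obtain x0 where "x0 \<in> cfg d n"
    using cfg_nonempty[OF assms] by blast
  define v where "v x = (if x = x0 then 1 else 0 :: complex)" for x
  have "(\<Sum>x\<in>cfg d n. (cmod (v x))\<^sup>2) = (\<Sum>x\<in>cfg d n. if x = x0 then 1 else 0)"
    by (intro sum.cong) (auto simp: v_def)
  then have "vnorm d n v = 1"
    using \<open>x0 \<in> cfg d n\<close> by (simp add: vnorm_def)
  then have "vnorm d n (mvmul d n A v) \<le> op_norm d n A"
    using vnorm_mvmul_le[of d n A v] by simp
  then show ?thesis
    using vnorm_nonneg order_trans by blast
qed

lemma op_norm_scale_unit:
  assumes "cmod c = 1"
  shows "op_norm d n (\<lambda>x y. c * A x y) = op_norm d n A"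
  using assms by (simp add: op_norm_def mvmul_scale_left vnorm_scale)

lemma hs_norm_mmul_le:
  assumes "0 < d"
  shows "hs_norm d n (mmul d n K A) \<le> op_norm d n K * hs_norm d n A"
proof -
  define col where "col y z = A z y" for y z
  have "(\<Sum>x\<in>cfg d n. \<Sum>y\<in>cfg d n. (cmod (mmul d n K A x y))\<^sup>2)
      = (\<Sum>y\<in>cfg d n. (vnorm d n (mvmul d n K (col y)))\<^sup>2)"
    by (subst sum.swap) (simp add: vnorm_def mvmul_def mmul_def col_def sum_nonneg)
  also have "\<dots> \<le> (\<Sum>y\<in>cfg d n. (op_norm d n K * vnorm d n (col y))\<^sup>2)"
    by (intro sum_mono power_mono vnorm_mvmul_le vnorm_nonneg)
  also have "\<dots> = (op_norm d n K)\<^sup>2 * (\<Sum>y\<in>cfg d n. \<Sum>x\<in>cfg d n. (cmod (A x y))\<^sup>2)"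
    by (simp add: power_mult_distrib vnorm_def col_def sum_nonneg sum_distrib_left)
  also have "\<dots> = (op_norm d n K)\<^sup>2 * (\<Sum>x\<in>cfg d n. \<Sum>y\<in>cfg d n. (cmod (A x y))\<^sup>2)"
    by (subst sum.swap) (rule refl)
  finally have "hs_norm d n (mmul d n K A) \<le> sqrt ((op_norm d n K)\<^sup>2 * (hs_norm d n A)\<^sup>2)"
    unfolding hs_norm_eq using assms by (simp add: sum_nonneg divide_right_mono)
  then show ?thesis
    using op_norm_nonneg[OF assms] by (simp add: real_sqrt_mult)
qed

lemma hs_norm_mmul_madj_le:
  assumes "0 < d"
  shows "hs_norm d n (mmul d n A (madj K)) \<le> op_norm d n K * hs_norm d n A"
  using hs_norm_mmul_le[OF assms, of n K "madj A"]
  by (simp only: hs_norm_madj madj_mmul madj_madj flip: hs_norm_madj[of d n "mmul d n A (madj K)"])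

lemma hs_norm_mmul_add_mmul_madj_le:
  assumes "0 < d"
  shows "hs_norm d n (\<lambda>x y. mmul d n K A x y + mmul d n A (madj K) x y) \<le> 2 * op_norm d n K * hs_norm d n A"
proof -
  have "hs_norm d n (\<lambda>x y. mmul d n K A x y + mmul d n A (madj K) x y)
        \<le> hs_norm d n (mmul d n K A) + hs_norm d n (mmul d n A (madj K))"
    by (rule hs_norm_add_le)
  also have "\<dots> \<le> 2 * op_norm d n K * hs_norm d n A"
    using hs_norm_mmul_le[OF assms, of n K A] hs_norm_mmul_madj_le[OF assms, of n A K] by simp
  finally show ?thesis .
qed

lemma weight_le: "weight n a \<le> n"
  unfolding weight_def by (rule order_trans[OF card_mono[of "{..<n}"]]) auto

lemma abs_influence_dir_deriv_le:
  assumes "0 < d"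
  shows "\<bar>influence_dir_deriv d n A B\<bar> \<le> 2 * real n * hs_norm d n A * hs_norm d n B"
proof -
  define N where "N = real d ^ n"
  have "0 < N"
    using assms by (simp add: N_def)
  let ?a = "\<lambda>a. cmod (pauli_coeff d n A a)" and ?b = "\<lambda>a. cmod (pauli_coeff d n B a)"
  have real_bound: "\<bar>w * (2 * r / (N * N))\<bar> \<le> 2 * real n / (N * N) * (p * q)"
    if "\<bar>r\<bar> \<le> p * q" "0 \<le> w" "w \<le> real n" for w r p q :: real
  proof -
    have "\<bar>w * (2 * r / (N * N))\<bar> = w * (2 * \<bar>r\<bar>) / (N * N)"
      using that \<open>0 < N\<close> by (simp add: abs_mult)
    also have "\<dots> \<le> real n * (2 * (p * q)) / (N * N)"
      using that \<open>0 < N\<close> by (intro divide_right_mono mult_mono) auto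
    finally show ?thesis
      by (simp add: mult_ac)
  qed
  have term_le: "\<bar>real (weight n a) * (2 * Re (cnj (pauli_coeff d n A a) * pauli_coeff d n B a) / real d ^ (2 * n))\<bar>
        \<le> 2 * real n / (N * N) * (\<bar>?a a\<bar> * \<bar>?b a\<bar>)" for a
  proof -
    have Re_le: "\<bar>Re (cnj (pauli_coeff d n A a) * pauli_coeff d n B a)\<bar> \<le> \<bar>?a a\<bar> * \<bar>?b a\<bar>"
      using abs_Re_le_cmod[of "cnj (pauli_coeff d n A a) * pauli_coeff d n B a"] by (simp add: norm_mult)
    have "real d ^ (2 * n) = N * N"
      by (simp add: N_def flip: power_add mult_2)
    then show ?thesis
      using weight_le[of n a] by (simp only:) (rule real_bound[OF Re_le], simp_all)
  qed
  have "\<bar>influence_dir_deriv d n A B\<bar> \<le> (\<Sum>a\<in>labels d n. 2 * real n / (N * N) * (\<bar>?a a\<bar> * \<bar>?b a\<bar>))"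
    unfolding influence_dir_deriv_def by (rule order_trans[OF sum_abs sum_mono[OF term_le]])
  also have "\<dots> \<le> 2 * real n / (N * N) * (L2_set ?a (labels d n) * L2_set ?b (labels d n))"
    unfolding sum_distrib_left[symmetric]
    by (intro mult_left_mono L2_set_mult_ineq) (use \<open>0 < N\<close> in simp)
  also have "\<dots> = 2 * real n * hs_norm d n A * hs_norm d n B"
    using \<open>0 < N\<close> assms by (simp add: L2_set_pauli_coeff[OF assms] N_def)
  finally show ?thesis .
qed

theorem mainTheorem16:
  fixes d n :: nat and H Op :: qop
  assumes "d \<ge> 2" and "n \<ge> 1"
    and "hermitian d n H"
    and "hs_norm d n Op = 1"
  shows "\<exists>R. (influence_traj d n H Op has_real_derivative R) (at 0)
             \<and> \<bar>R\<bar> \<le> 4 * real n * op_norm d n H"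
proof -
  have "0 < d"
    using assms(1) by simp
  define K where "K x y = - \<i> * H x y" for x y
  define D where "D x y = mmul d n K Op x y + mmul d n Op (madj K) x y" for x y
  have deriv: "(influence_traj d n H Op has_real_derivative influence_dir_deriv d n Op D) (at 0)"
    unfolding influence_traj_def[abs_def] D_def K_def
    by (intro influence_has_real_derivative conjugation_at_0 conjugation_has_vector_derivative
        evol_0 evol_has_vector_derivative)
  have "op_norm d n K = op_norm d n H"
    unfolding K_def by (rule op_norm_scale_unit) simp
  then have "hs_norm d n D \<le> 2 * op_norm d n H"
    using hs_norm_mmul_add_mmul_madj_le[OF \<open>0 < d\<close>, of n K Op] assms(4)
    unfolding D_def by simp
  then have "2 * real n * hs_norm d n D \<le> 4 * real n * op_norm d n H"
    using mult_left_mono[of _ _ "2 * real n"] by fastforce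
  then have "\<bar>influence_dir_deriv d n Op D\<bar> \<le> 4 * real n * op_norm d n H"
    using abs_influence_dir_deriv_le[OF \<open>0 < d\<close>, of n Op D] assms(4) by simp
  with deriv show ?thesis
    by blast
qed

end
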